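(* For any $\lambda_0,\lambda_1>0$ there is a function $f:(0,\infty)\to[0,\infty)$ with $\lim_{\epsilon\downarrow0}f(\epsilon)=0$ such that $$\mathcal{M}_{n+2}^{\epsilon,\lambda_0,\lambda_1}(x)\le f(\epsilon)\,\mathcal{M}_n^{\epsilon,\lambda_0,\lambda_1}(x)\quad\text{for all } n\in\mathbb{N},\ x\in\Gamma^\circ.$$
   Context: Fix $\alpha>\beta>0$. For $i\in\{0,1\}$ let $\Phi_i^t(x)=(i+(x_1-i)e^{-\alpha t},i+(x_2-i)e^{-\beta t})$ and $\Psi_i^t=\Phi_i^{-t}$. Let $\Gamma=\{(x_1,x_2):0\le x_2\le1,\ x_2^{\alpha/\beta}\le x_1\le1-(1-x_2)^{\alpha/\beta}\}$, $\Gamma^\circ$ its interior. For $\mathbf t=(t_1,\dots,t_n)\in(0,\infty)^n$ let $\Psi_0^{\mathbf t}$ be obtained by first applying $\Psi_0^{t_n}$, then $\Psi_1^{t_{n-1}}$, then $\Psi_0^{t_{n-2}}$, and so on alternately; for $0\le j\le n-1$, $\Psi_0^{(t_{n-j},\dots,t_n)}$ is the analogous map built from the last $j+1$ times. Let $T_0^n(x)=\{\mathbf t\in(0,\infty)^n:\Psi_0^{\mathbf t}(x)\in\Gamma^\circ\}$, $D(x)=\alpha\beta(x_1-x_2)$, and $M_n^\epsilon(x)=\{\mathbf t\in T_0^n(x):|D(\Psi_0^{(t_{n-j},\dots,t_n)}x)|<\epsilon,\ 0\le j\le n-1\}$. For real $\lambda_0,\lambda_1$, let $\lambda_0^{(n)}\in\mathbb{R}^n$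 be the vector with alternating entries $\lambda_0,\lambda_1$ whose last entry is $\lambda_0$, and $\mathcal{M}_n^{\epsilon,\lambda_0,\lambda_1}(x)=\int_{M_n^\epsilon(x)}e^{-\langle\lambda_0^{(n)},\mathbf t\rangle}\,d\mathbf t$. *)

theory Defs
  imports "HOL-Analysis.Analysis"
begin

text \<open>Points of the plane are pairs of reals. Time vectors in (0,inf)^n are
  functions on the index set {..<n}: entry t_k (k = 1..n) of the paper is t (k - 1).\<close>

text \<open>Psi_i^s = Phi_i^{-s}, i in {0,1}.\<close>
definition Psi :: "real \<Rightarrow> real \<Rightarrow> nat \<Rightarrow> real \<Rightarrow> real \<times> real \<Rightarrow> real \<times> real" where
  "Psi \<alpha> \<beta> i s x = (real i + (fst x - real i) * exp (\<alpha> * s),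
                      real i + (snd x - real i) * exp (\<beta> * s))"

text \<open>Psi_tail \<alpha> \<beta> t n j x = Psi_0^{(t_{n-j},...,t_n)}(x): first Psi_0^{t_n},
  then Psi_1^{t_{n-1}}, then Psi_0^{t_{n-2}}, ..., finally Psi_{j mod 2}^{t_{n-j}}.\<close>
fun Psi_tail :: "real \<Rightarrow> real \<Rightarrow> (nat \<Rightarrow> real) \<Rightarrow> nat \<Rightarrow> nat \<Rightarrow> real \<times> real \<Rightarrow> real \<times> real" where
  "Psi_tail \<alpha> \<beta> t n 0 x = Psi \<alpha> \<beta> 0 (t (n - 1)) x"
| "Psi_tail \<alpha> \<beta> t n (Suc j) x =
     Psi \<alpha> \<beta> (Suc j mod 2) (t (n - 1 - Suc j)) (Psi_tail \<alpha> \<beta> t n j x)"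

definition Psi_full :: "real \<Rightarrow> real \<Rightarrow> (nat \<Rightarrow> real) \<Rightarrow> nat \<Rightarrow> real \<times> real \<Rightarrow> real \<times> real" where
  "Psi_full \<alpha> \<beta> t n x = Psi_tail \<alpha> \<beta> t n (n - 1) x"

definition Gamma :: "real \<Rightarrow> real \<Rightarrow> (real \<times> real) set" where
  "Gamma \<alpha> \<beta> = {x. 0 \<le> snd x \<and> snd x \<le> 1 \<and> snd x powr (\<alpha> / \<beta>) \<le> fst x
                   \<and> fst x \<le> 1 - (1 - snd x) powr (\<alpha> / \<beta>)}"

definition Dfun :: "real \<Rightarrow> real \<Rightarrow> real \<times> real \<Rightarrow> real" where
  "Dfun \<alpha> \<beta> x = \<alpha> * \<beta> * (fst x - snd x)"

definition T0 :: "real \<Rightarrow> real \<Rightarrow> nat \<Rightarrow> real \<times> real \<Rightarrow> (nat \<Rightarrow> real) set" where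
  "T0 \<alpha> \<beta> n x = {t \<in> {..<n} \<rightarrow>\<^sub>E {0<..}. Psi_full \<alpha> \<beta> t n x \<in> interior (Gamma \<alpha> \<beta>)}"

definition Mset :: "real \<Rightarrow> real \<Rightarrow> nat \<Rightarrow> real \<Rightarrow> real \<times> real \<Rightarrow> (nat \<Rightarrow> real) set" where
  "Mset \<alpha> \<beta> n \<epsilon> x = {t \<in> T0 \<alpha> \<beta> n x. \<forall>j<n. \<bar>Dfun \<alpha> \<beta> (Psi_tail \<alpha> \<beta> t n j x)\<bar> < \<epsilon>}"

definition lamvec :: "real \<Rightarrow> real \<Rightarrow> nat \<Rightarrow> nat \<Rightarrow> real" where
  "lamvec l0 l1 n i = (if even (n - 1 - i) then l0 else l1)"

definition Mint :: "real \<Rightarrow> real \<Rightarrow> nat \<Rightarrow> real \<Rightarrow> real \<Rightarrow> real \<Rightarrow> real \<times> real \<Rightarrow> ennreal" where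
  "Mint \<alpha> \<beta> n \<epsilon> l0 l1 x =
     (\<integral>\<^sup>+ t. indicator (Mset \<alpha> \<beta> n \<epsilon> x) t
              * ennreal (exp (- (\<Sum>i<n. lamvec l0 l1 n i * t i)))
        \<partial>(PiM {..<n} (\<lambda>_. lborel)))"

end

theory Submission
  imports Defs
begin

text \<open>Integrate out the times t 0 and t 1 of the last two flows. The region \<Gamma> is
  forward invariant under the contracting flows \<Phi>_i, so the point y reached after the first
  n flows lies in the interior of \<Gamma> and the remaining times form an admissible n-vector.
  The next two points lie within \<epsilon>/(\<alpha>\<beta>) of the diagonal, while the coordinates of an
  exponential flow separate at rate at least \<alpha> - \<beta>; hence either t 0 is O(\<epsilon>), or t 1 lies in
  a window of length O(\<epsilon>) determined by y alone. Bounding the weight of (t 0, t 1) by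
  exp (- min l0 l1 (t 0 + t 1)), these two strips carry mass at most
  12 \<epsilon> / (\<alpha> \<beta> (\<alpha> - \<beta>) min l0 l1).\<close>

definition point_reflect :: "real \<times> real \<Rightarrow> real \<times> real" where
  "point_reflect x = (1 - fst x, 1 - snd x)"

lemma point_reflect_involutive [simp]: "point_reflect (point_reflect x) = x"
  by (simp add: point_reflect_def)

lemma Psi_one_conv_reflect: "Psi \<alpha> \<beta> 1 s x = point_reflect (Psi \<alpha> \<beta> 0 s (point_reflect x))"
  by (simp add: Psi_def point_reflect_def algebra_simps)

lemma Psi_zero_conv_reflect: "Psi \<alpha> \<beta> 0 s x = point_reflect (Psi \<alpha> \<beta> 1 s (point_reflect x))"
  by (simp add: Psi_def point_reflect_def algebra_simps)

lemma Gamma_subset_unit_square: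
  assumes "v \<in> Gamma \<alpha> \<beta>"
  shows "0 \<le> fst v \<and> fst v \<le> 1 \<and> 0 \<le> snd v \<and> snd v \<le> 1"
proof -
  have "0 \<le> snd v powr (\<alpha>/\<beta>)" "0 \<le> (1 - snd v) powr (\<alpha>/\<beta>)" by simp_all
  moreover have "0 \<le> snd v \<and> snd v \<le> 1 \<and> snd v powr (\<alpha>/\<beta>) \<le> fst v \<and> fst v \<le> 1 - (1 - snd v) powr (\<alpha>/\<beta>)"
    using assms unfolding Gamma_def by simp
  ultimately show ?thesis by linarith
qed

lemma point_reflect_mem_Gamma_iff [simp]: "point_reflect v \<in> Gamma \<alpha> \<beta> \<longleftrightarrow> v \<in> Gamma \<alpha> \<beta>"
  unfolding Gamma_def point_reflect_def by auto

text \<open>The lower boundary x_1 = x_2^(\<alpha>/\<beta>) is a trajectory of the contracting flow towards 0;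
  the upper boundary is pushed inwards by convexity of x \<mapsto> x powr (\<alpha>/\<beta>).\<close>
lemma Psi_zero_neg_mem_Gamma:
  assumes "0 < \<beta>" "\<beta> < \<alpha>" "v \<in> Gamma \<alpha> \<beta>" "0 \<le> s"
  shows "Psi \<alpha> \<beta> 0 (- s) v \<in> Gamma \<alpha> \<beta>"
proof -
  define a where "a = \<alpha> / \<beta>"
  define c where "c = exp (- (\<beta> * s))"
  have a1: "1 \<le> a" using assms by (simp add: a_def)
  have c0: "0 < c" and c1: "c \<le> 1" using assms by (auto simp: c_def)
  have ca: "c powr a = exp (- (\<alpha> * s))" unfolding c_def a_def powr_def using assms by simp
  obtain v1 v2 where v: "v = (v1, v2)" by force
  have g: "0 \<le> v2" "v2 \<le> 1" "v2 powr a \<le> v1" "v1 \<le> 1 - (1 - v2) powr a"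
    using assms(3) unfolding Gamma_def v a_def by auto
  have lower: "(v2 * c) powr a \<le> v1 * c powr a"
    using g c0 by (simp add: powr_mult mult_right_mono)
  have upper_convex: "(1 - v2 * c) powr a \<le> (1 - c) + c * (1 - v2) powr a"
  proof (cases "v2 = 1")
    case True
    then show ?thesis using powr_le_one_le[of "1 - c" a] c0 c1 a1
      by (cases "c = 1") auto
  next
    case False
    have "convex_on {0<..} (\<lambda>x::real. x powr a)" using powr_convex a1 by simp
    from convex_onD[OF this, of c 1 "1 - v2"] c0 c1 g False
    show ?thesis by (simp add: algebra_simps)
  qed
  have "v1 * c powr a \<le> (1 - (1 - v2) powr a) * c powr a" using g by (simp add: mult_right_mono)
  also have "\<dots> \<le> (1 - (1 - v2) powr a) * c"
    using powr_le_one_le[OF c0 c1 a1] g a1 by (intro mult_left_mono) (auto simp: powr_le1)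
  also have "\<dots> \<le> 1 - (1 - v2 * c) powr a" using upper_convex by (simp add: algebra_simps)
  finally have upper: "v1 * c powr a \<le> 1 - (1 - v2 * c) powr a" .
  have "Psi \<alpha> \<beta> 0 (- s) v = (v1 * c powr a, v2 * c)"
    using ca unfolding Psi_def v c_def by simp
  moreover have "0 \<le> v2 * c" "v2 * c \<le> 1" using g c0 c1 by (auto simp: mult_le_one)
  ultimately show ?thesis using lower upper unfolding Gamma_def a_def by simp
qed

lemma mem_Gamma_if_Psi_mem_Gamma:
  assumes "0 < \<beta>" "\<beta> < \<alpha>" "i < 2" "0 \<le> s" "Psi \<alpha> \<beta> i s u \<in> Gamma \<alpha> \<beta>"
  shows "u \<in> Gamma \<alpha> \<beta>"
proof -
  have undo: "Psi \<alpha> \<beta> 0 (- s) (Psi \<alpha> \<beta> 0 s v) = v" for v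
    by (simp add: Psi_def mult.assoc exp_add[symmetric])
  have flow0: "v \<in> Gamma \<alpha> \<beta>" if "Psi \<alpha> \<beta> 0 s v \<in> Gamma \<alpha> \<beta>" for v
    using Psi_zero_neg_mem_Gamma[OF assms(1,2) that assms(4)] by (simp add: undo)
  consider "i = 0" | "i = 1" using assms(3) by linarith
  then show ?thesis
  proof cases
    case 1
    then show ?thesis using assms(5) flow0 by simp
  next
    case 2
    then have "Psi \<alpha> \<beta> 0 s (point_reflect u) \<in> Gamma \<alpha> \<beta>"
      using assms(5) Psi_one_conv_reflect[of \<alpha> \<beta> s u] point_reflect_mem_Gamma_iff by metis
    then show ?thesis using flow0 by fastforce
  qed
qed

lemma mem_interior_Gamma_if_Psi_mem_interior:
  assumes "0 < \<beta>" "\<beta> < \<alpha>" "i < 2" "0 \<le> s" "Psi \<alpha> \<beta> i s v \<in> interior (Gamma \<alpha> \<beta>)"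
  shows "v \<in> interior (Gamma \<alpha> \<beta>)"
proof -
  let ?V = "Psi \<alpha> \<beta> i s -` interior (Gamma \<alpha> \<beta>)"
  have "continuous_on UNIV (Psi \<alpha> \<beta> i s)"
    unfolding Psi_def by (intro continuous_intros)
  then have "open ?V" by (rule open_vimage[OF open_interior])
  moreover have "?V \<subseteq> Gamma \<alpha> \<beta>"
    using mem_Gamma_if_Psi_mem_Gamma[OF assms(1-4)] interior_subset by blast
  ultimately show ?thesis using interior_maximal assms(5) by blast
qed

lemma exp_flow_near_diagonal_time_gap:
  fixes \<alpha> \<beta> e p q b b' :: real
  assumes "0 < \<beta>" "\<beta> < \<alpha>" "b \<le> b'"
    and near: "\<bar>p * exp (\<alpha> * b) - q * exp (\<beta> * b)\<bar> < e"
    and near': "\<bar>p * exp (\<alpha> * b') - q * exp (\<beta> * b')\<bar> < e"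
    and lower: "1/2 \<le> p * exp (\<alpha> * b)" and upper': "p * exp (\<alpha> * b') \<le> 1"
  shows "b' - b < 6 * e / (\<alpha> - \<beta>)"
proof -
  define r where "r = b' - b"
  define g where "g = p * exp (\<alpha> * b)"
  define k where "k = q * exp (\<beta> * b)"
  define A where "A = exp (\<alpha> * r)"
  define B where "B = exp (\<beta> * r)"
  have r0: "r \<ge> 0" using assms by (simp add: r_def)
  have e1: "p * exp (\<alpha> * b') = g * A" unfolding g_def A_def r_def
    by (simp add: exp_add[symmetric] algebra_simps)
  have e2: "q * exp (\<beta> * b') = k * B" unfolding k_def B_def r_def
    by (simp add: exp_add[symmetric] algebra_simps)
  have B1: "1 \<le> B" unfolding B_def using r0 assms by simp
  have BA: "B \<le> A" unfolding A_def B_def using r0 assms by (simp add: mult_right_mono)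
  have g12: "1/2 \<le> g" using lower g_def by simp
  have A2: "A \<le> 2"
  proof -
    have "(1/2) * A \<le> g * A" using g12 B1 BA by (intro mult_right_mono) auto
    then show ?thesis using upper' e1 by simp
  qed
  have hk: "\<bar>g - k\<bar> < e" using near g_def k_def by simp
  have "(1/2) * (A - B) \<le> g * (A - B)" using g12 BA by (intro mult_right_mono) auto
  also have "\<dots> = (g * A - k * B) - (g - k) * B" by (simp add: algebra_simps)
  also have "\<dots> < e + e * B"
  proof -
    have "\<bar>(g - k) * B\<bar> \<le> e * B" using hk B1 by (simp add: abs_mult mult_right_mono)
    then show ?thesis using near' e1 e2 by linarith
  qed
  also have "\<dots> \<le> 3 * e"
  proof -
    have "e * B \<le> e * 2" using BA A2 hk by (intro mult_left_mono) auto
    then show ?thesis by linarith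
  qed
  finally have AB: "A - B < 6 * e" by simp
  have "0 \<le> exp ((\<alpha> - \<beta>) * r) - 1" using assms r0 by simp
  then have "exp ((\<alpha> - \<beta>) * r) - 1 \<le> B * (exp ((\<alpha> - \<beta>) * r) - 1)"
    using mult_right_mono[OF B1] by fastforce
  also have "\<dots> = A - B" unfolding A_def B_def by (simp add: algebra_simps exp_add[symmetric])
  finally have "(\<alpha> - \<beta>) * r < 6 * e" using AB exp_ge_add_one_self[of "(\<alpha> - \<beta>) * r"] by linarith
  then show ?thesis using assms unfolding r_def by (simp add: field_simps)
qed

definition near_diagonal_times :: "real \<Rightarrow> real \<Rightarrow> real \<Rightarrow> real \<times> real \<Rightarrow> real set" where
  "near_diagonal_times \<alpha> \<beta> e u = {b. 0 < b \<and> \<bar>fst (Psi \<alpha> \<beta> 0 b u) - snd (Psi \<alpha> \<beta> 0 b u)\<bar> < e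
      \<and> 1/2 \<le> fst (Psi \<alpha> \<beta> 0 b u) \<and> fst (Psi \<alpha> \<beta> 0 b u) \<le> 1}"

lemma near_diagonal_times_window:
  assumes "0 < \<beta>" "\<beta> < \<alpha>" "b \<in> near_diagonal_times \<alpha> \<beta> e u"
  defines "c \<equiv> Inf (near_diagonal_times \<alpha> \<beta> e u)"
  shows "b \<in> {c .. c + 6 * e / (\<alpha> - \<beta>)}"
proof -
  let ?T = "near_diagonal_times \<alpha> \<beta> e u"
  have "bdd_below ?T" unfolding near_diagonal_times_def by (rule bdd_belowI[of _ 0]) auto
  then have "c \<le> b" unfolding c_def by (rule cInf_lower[OF assms(3)])
  moreover have "b - 6 * e / (\<alpha> - \<beta>) \<le> c"
    unfolding c_def
  proof (rule cInf_greatest)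
    show "?T \<noteq> {}" using assms(3) by blast
    fix b' assume b': "b' \<in> ?T"
    show "b - 6 * e / (\<alpha> - \<beta>) \<le> b'"
    proof (cases "b \<le> b'")
      case True
      have "0 < e" using b' unfolding near_diagonal_times_def by auto
      then show ?thesis using True assms by (simp add: order.trans[OF _ True])
    next
      case False
      then have "b - b' < 6 * e / (\<alpha> - \<beta>)"
        using exp_flow_near_diagonal_time_gap[OF assms(1,2), where b=b' and b'=b and p="fst u" and q="snd u"] b' assms(3)
        unfolding near_diagonal_times_def Psi_def by auto
      then show ?thesis by linarith
    qed
  qed
  ultimately show ?thesis by simp
qed

lemma short_or_near_diagonal_time0:
  assumes "0 < \<beta>" "\<beta> < \<alpha>" "0 < a" "0 < b"
    and z: "z = Psi \<alpha> \<beta> 0 b y" and w: "w = Psi \<alpha> \<beta> 1 a z"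
    and near_z: "\<bar>fst z - snd z\<bar> < e" and near_w: "\<bar>fst w - snd w\<bar> < e"
    and "w \<in> Gamma \<alpha> \<beta>"
  shows "a < 6 * e / (\<alpha> - \<beta>) \<or> b \<in> near_diagonal_times \<alpha> \<beta> e y"
proof -
  have w1: "1 - fst w = (1 - fst z) * exp (\<alpha> * a)" "1 - snd w = (1 - snd z) * exp (\<beta> * a)"
    using w by (simp_all add: Psi_def algebra_simps)
  note w_square = Gamma_subset_unit_square[OF \<open>w \<in> Gamma \<alpha> \<beta>\<close>]
  show ?thesis
  proof (cases "1/2 \<le> fst z")
    case True
    have "0 \<le> (1 - fst z) * exp (\<alpha> * a)" using w1 w_square by simp
    then have "fst z \<le> 1" by (simp add: zero_le_mult_iff)
    then show ?thesis
      using True near_z \<open>0 < b\<close> unfolding near_diagonal_times_def z by simp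
  next
    case False
    have "a - 0 < 6 * e / (\<alpha> - \<beta>)"
      using exp_flow_near_diagonal_time_gap[OF assms(1,2), where b=0 and b'=a and p="1 - fst z" and q="1 - snd z"]
        w1 near_z near_w w_square False \<open>0 < a\<close>
      by (auto simp: abs_minus_commute)
    then show ?thesis by simp
  qed
qed

lemma short_or_near_diagonal_time:
  assumes "0 < \<beta>" "\<beta> < \<alpha>" "0 < a" "0 < b"
    and z: "z = Psi \<alpha> \<beta> (n mod 2) b y" and w: "w = Psi \<alpha> \<beta> (Suc n mod 2) a z"
    and near_z: "\<bar>fst z - snd z\<bar> < e" and near_w: "\<bar>fst w - snd w\<bar> < e"
    and "w \<in> Gamma \<alpha> \<beta>"
  shows "a < 6 * e / (\<alpha> - \<beta>) \<or> b \<in> near_diagonal_times \<alpha> \<beta> e (if even n then y else point_reflect y)"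
proof (cases "even n")
  case True
  then have "n mod 2 = 0" "Suc n mod 2 = 1" by presburger+
  then show ?thesis using short_or_near_diagonal_time0[OF assms(1-4) _ _ near_z near_w] assms(5-6,9) True
    by simp
next
  case False
  then have "n mod 2 = 1" "Suc n mod 2 = 0" by presburger+
  then have "z = Psi \<alpha> \<beta> 1 b y" "w = Psi \<alpha> \<beta> 0 a z" using z w by simp_all
  then have z': "point_reflect z = Psi \<alpha> \<beta> 0 b (point_reflect y)"
    and w': "point_reflect w = Psi \<alpha> \<beta> 1 a (point_reflect z)"
    unfolding Psi_one_conv_reflect[of _ _ _ y] Psi_zero_conv_reflect[of _ _ _ z] by simp_all
  have "\<bar>fst (point_reflect v) - snd (point_reflect v)\<bar> = \<bar>fst v - snd v\<bar>" for v
    by (simp add: point_reflect_def abs_minus_commute)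
  then have "a < 6 * e / (\<alpha> - \<beta>) \<or> b \<in> near_diagonal_times \<alpha> \<beta> e (point_reflect y)"
    using short_or_near_diagonal_time0[OF assms(1-4) z' w'] near_z near_w \<open>w \<in> Gamma \<alpha> \<beta>\<close> by simp
  then show ?thesis using False by simp
qed

lemma distr_PiM_reindex_bij:
  assumes M: "sigma_finite_measure M" and I: "finite I" and f: "bij_betw f I K"
  shows "distr (PiM K (\<lambda>_. M)) (PiM I (\<lambda>_. M)) (\<lambda>\<omega>. \<lambda>i\<in>I. \<omega> (f i)) = PiM I (\<lambda>_. M)"
proof (rule product_sigma_finite.PiM_eqI[OF _ I])
  show "product_sigma_finite (\<lambda>_. M)" using M by (simp add: product_sigma_finite_def)
  show "sets (distr (PiM K (\<lambda>_. M)) (PiM I (\<lambda>_. M)) (\<lambda>\<omega>. \<lambda>i\<in>I. \<omega> (f i))) = sets (PiM I (\<lambda>_. M))"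
    by simp
  fix A assume A: "\<And>i. i \<in> I \<Longrightarrow> A i \<in> sets M"
  let ?T = "\<lambda>\<omega>. \<lambda>i\<in>I. \<omega> (f i)" and ?g = "inv_into I f"
  have K: "finite K" using I f bij_betw_finite by blast
  have g: "bij_betw ?g K I" using f by (rule bij_betw_inv_into)
  have fg: "k \<in> K \<Longrightarrow> f (?g k) = k" for k using f by (simp add: bij_betw_inv_into_right)
  have gf: "i \<in> I \<Longrightarrow> ?g (f i) = i" for i using f by (simp add: bij_betw_inv_into_left)
  have T: "?T \<in> PiM K (\<lambda>_. M) \<rightarrow>\<^sub>M PiM I (\<lambda>_. M)"
    using f by (intro measurable_restrict measurable_component_singleton) (auto simp: bij_betw_def)
  have "?T -` PiE I A \<inter> space (PiM K (\<lambda>_. M)) = PiE K (\<lambda>k. A (?g k))"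
  proof (intro set_eqI iffI)
    fix \<omega> assume "\<omega> \<in> ?T -` PiE I A \<inter> space (PiM K (\<lambda>_. M))"
    then have "\<omega> \<in> extensional K" "\<And>i. i \<in> I \<Longrightarrow> \<omega> (f i) \<in> A i"
      unfolding space_PiM by (auto simp: PiE_iff)
    then show "\<omega> \<in> PiE K (\<lambda>k. A (?g k))"
      using fg bij_betwE[OF g] by (auto simp: PiE_iff) metis
  next
    fix \<omega> assume \<omega>: "\<omega> \<in> PiE K (\<lambda>k. A (?g k))"
    have "A (?g k) \<subseteq> space M" if "k \<in> K" for k
      using A bij_betwE[OF g] that sets.sets_into_space by blast
    then have "\<omega> \<in> space (PiM K (\<lambda>_. M))" using \<omega> unfolding space_PiM by (auto simp: PiE_iff)
    moreover have "?T \<omega> \<in> PiE I A" using \<omega> gf bij_betwE[OF f] by (auto simp: PiE_iff) metis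
    ultimately show "\<omega> \<in> ?T -` PiE I A \<inter> space (PiM K (\<lambda>_. M))" by blast
  qed
  then have "emeasure (distr (PiM K (\<lambda>_. M)) (PiM I (\<lambda>_. M)) ?T) (PiE I A)
      = emeasure (PiM K (\<lambda>_. M)) (PiE K (\<lambda>k. A (?g k)))"
    using A by (subst emeasure_distr[OF T]) (auto intro!: sets_PiM_I_finite I)
  also have "\<dots> = (\<Prod>k\<in>K. emeasure M (A (?g k)))"
    using A bij_betwE[OF g] M K by (intro product_sigma_finite.emeasure_PiM) (auto simp: product_sigma_finite_def)
  also have "\<dots> = (\<Prod>i\<in>I. emeasure M (A i))"
    using prod.reindex_bij_betw[OF g, of "\<lambda>i. emeasure M (A i)"] .
  finally show "emeasure (distr (PiM K (\<lambda>_. M)) (PiM I (\<lambda>_. M)) ?T) (PiE I A) = (\<Prod>i\<in>I. emeasure M (A i))" .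
qed

lemma nn_integral_PiM_pair_prod:
  fixes A B :: "'a \<Rightarrow> ennreal"
  assumes M: "sigma_finite_measure M"
    and [measurable]: "A \<in> borel_measurable M" "B \<in> borel_measurable M"
  shows "(\<integral>\<^sup>+ v. A (v (0::nat)) * B (v 1) \<partial>PiM {0, 1} (\<lambda>_. M)) = (\<integral>\<^sup>+ a. A a \<partial>M) * (\<integral>\<^sup>+ b. B b \<partial>M)"
proof -
  define C where "C i = (if i = (0::nat) then A else B)" for i
  have "(\<integral>\<^sup>+ v. A (v (0::nat)) * B (v 1) \<partial>PiM {0, 1} (\<lambda>_. M)) = (\<integral>\<^sup>+ v. (\<Prod>i\<in>{0, 1}. C i (v i)) \<partial>PiM {0, 1} (\<lambda>_. M))"
    by (simp add: C_def)
  also have "\<dots> = (\<Prod>i\<in>{0, 1}. integral\<^sup>N M (C i))"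
    using M by (intro product_sigma_finite.product_nn_integral_prod)
      (auto simp: C_def product_sigma_finite_def)
  finally show ?thesis by (simp add: C_def)
qed

definition drop2 :: "nat \<Rightarrow> (nat \<Rightarrow> 'a) \<Rightarrow> nat \<Rightarrow> 'a" where
  "drop2 n t = (\<lambda>k\<in>{..<n}. t (k + 2))"

lemma drop2_measurable [measurable]:
  "drop2 n \<in> PiM K (\<lambda>_. M) \<rightarrow>\<^sub>M PiM {..<n} (\<lambda>_. M)" if "{2..<n+2} \<subseteq> K"
  using that unfolding drop2_def by (intro measurable_restrict measurable_component_singleton) auto

lemma nn_integral_PiM_add2_le:
  fixes M :: "'a measure" and F G :: "(nat \<Rightarrow> 'a) \<Rightarrow> ennreal"
    and H :: "(nat \<Rightarrow> 'a) \<Rightarrow> 'a \<Rightarrow> 'a \<Rightarrow> ennreal"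
  assumes M: "sigma_finite_measure M"
    and F: "F \<in> borel_measurable (PiM {..<n+2} (\<lambda>_. M))"
    and G: "G \<in> borel_measurable (PiM {..<n} (\<lambda>_. M))"
    and H: "\<And>\<omega>. (\<lambda>v. H \<omega> (v 0) (v 1)) \<in> borel_measurable (PiM {0::nat, 1} (\<lambda>_. M))"
    and H_int: "\<And>\<omega>. (\<integral>\<^sup>+ v. H \<omega> (v 0) (v 1) \<partial>PiM {0::nat, 1} (\<lambda>_. M)) = C"
    and F_le: "\<And>t. F t \<le> G (drop2 n t) * H (drop2 n t) (t 0) (t 1)"
  shows "(\<integral>\<^sup>+ t. F t \<partial>PiM {..<n+2} (\<lambda>_. M)) \<le> C * (\<integral>\<^sup>+ t. G t \<partial>PiM {..<n} (\<lambda>_. M))"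
proof -
  define K where "K = {2..<n+2}"
  define J where "J = {0::nat, 1}"
  have KJ: "{..<n+2} = K \<union> J" unfolding K_def J_def by auto
  have psf: "product_sigma_finite (\<lambda>_. M)"
    using M by (simp add: product_sigma_finite_def)
  have merge: "drop2 n (merge K J (\<omega>, v)) = drop2 n \<omega>" "merge K J (\<omega>, v) 0 = v 0" "merge K J (\<omega>, v) 1 = v 1"
    for \<omega> v :: "nat \<Rightarrow> 'a"
    unfolding drop2_def K_def J_def by (auto simp: merge_def)
  have GK: "(\<lambda>\<omega>. G (drop2 n \<omega>)) \<in> borel_measurable (PiM K (\<lambda>_. M))"
    using G unfolding K_def by measurable
  have "(\<integral>\<^sup>+ t. F t \<partial>PiM {..<n+2} (\<lambda>_. M))
      = (\<integral>\<^sup>+ \<omega>. (\<integral>\<^sup>+ v. F (merge K J (\<omega>, v)) \<partial>PiM J (\<lambda>_. M)) \<partial>PiM K (\<lambda>_. M))"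
    using F unfolding KJ
    by (intro product_sigma_finite.product_nn_integral_fold[OF psf]) (auto simp: K_def J_def)
  also have "\<dots> \<le> (\<integral>\<^sup>+ \<omega>. G (drop2 n \<omega>) * C \<partial>PiM K (\<lambda>_. M))"
  proof (intro nn_integral_mono)
    fix \<omega> :: "nat \<Rightarrow> 'a"
    have "(\<integral>\<^sup>+ v. F (merge K J (\<omega>, v)) \<partial>PiM J (\<lambda>_. M))
        \<le> (\<integral>\<^sup>+ v. G (drop2 n \<omega>) * H (drop2 n \<omega>) (v 0) (v 1) \<partial>PiM J (\<lambda>_. M))"
      using F_le by (intro nn_integral_mono) (metis merge)
    also have "\<dots> = G (drop2 n \<omega>) * C"
      unfolding J_def by (simp only: nn_integral_cmult[OF H] H_int)
    finally show "(\<integral>\<^sup>+ v. F (merge K J (\<omega>, v)) \<partial>PiM J (\<lambda>_. M)) \<le> G (drop2 n \<omega>) * C" .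
  qed
  also have "\<dots> = C * (\<integral>\<^sup>+ \<omega>. G (drop2 n \<omega>) \<partial>PiM K (\<lambda>_. M))"
    using nn_integral_cmult[OF GK, of C] by (simp add: mult.commute)
  also have "(\<integral>\<^sup>+ \<omega>. G (drop2 n \<omega>) \<partial>PiM K (\<lambda>_. M))
      = (\<integral>\<^sup>+ t. G t \<partial>distr (PiM K (\<lambda>_. M)) (PiM {..<n} (\<lambda>_. M)) (drop2 n))"
    using G unfolding K_def by (intro nn_integral_distr[symmetric]) simp_all
  also have "distr (PiM K (\<lambda>_. M)) (PiM {..<n} (\<lambda>_. M)) (drop2 n) = PiM {..<n} (\<lambda>_. M)"
  proof -
    have "bij_betw (\<lambda>k. k + 2) {..<n} K" unfolding K_def
      by (rule bij_betwI[where g = "\<lambda>k. k - 2"]) auto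
    then show ?thesis unfolding drop2_def
      using M by (intro distr_PiM_reindex_bij) simp_all
  qed
  finally show ?thesis .
qed

definition exp_decay_pos :: "real \<Rightarrow> real \<Rightarrow> ennreal" where
  "exp_decay_pos L s = ennreal (indicator {0..} s * exp (- (L * s)))"

lemma exp_decay_pos_measurable [measurable]: "exp_decay_pos L \<in> borel_measurable borel"
  unfolding exp_decay_pos_def by measurable

lemma nn_integral_exp_decay_pos:
  assumes "0 < L"
  shows "(\<integral>\<^sup>+ s. exp_decay_pos L s \<partial>lborel) = ennreal (1 / L)"
proof -
  have "((\<lambda>s::real. exp (- L * s)) has_integral exp (- L * 0) / L) {0..}"
    using has_integral_exp_minus_to_infinity[OF assms] .
  then have "((\<lambda>s. if s \<in> {0..} then exp (- (L * s)) else 0) has_integral 1 / L) UNIV"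
    by (subst has_integral_restrict_UNIV) simp
  then have "((\<lambda>s. indicator {0..} s * exp (- (L * s))) has_integral 1 / L) UNIV"
    by (rule has_integral_eq[rotated]) (simp add: indicator_def)
  then show ?thesis unfolding exp_decay_pos_def
    by (rule nn_integral_has_integral_lborel[rotated 2]) auto
qed

definition strip_majorant :: "real \<Rightarrow> real \<Rightarrow> real \<Rightarrow> real \<Rightarrow> real \<Rightarrow> ennreal" where
  "strip_majorant L \<delta> c a b = indicator {0<..\<delta>} a * exp_decay_pos L b + exp_decay_pos L a * indicator {c..c+\<delta>} b"

lemma exp_le_strip_majorant:
  assumes "0 \<le> L" "0 < a" "0 < b" "a < \<delta> \<or> b \<in> {c..c+\<delta>}"
  shows "ennreal (exp (- (L * a)) * exp (- (L * b))) \<le> strip_majorant L \<delta> c a b"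
proof -
  have "exp (- (L * a)) * exp (- (L * b)) \<le> exp (- (L * a))"
    "exp (- (L * a)) * exp (- (L * b)) \<le> exp (- (L * b))"
    using assms by (simp_all add: mult_le_one)
  then show ?thesis using assms unfolding strip_majorant_def exp_decay_pos_def
    by (auto simp: indicator_def intro: ennreal_leI add_increasing2 add_increasing)
qed

lemma nn_integral_strip_majorant:
  assumes "0 < L" "0 \<le> \<delta>"
  shows "(\<integral>\<^sup>+ v. strip_majorant L \<delta> c (v 0) (v 1) \<partial>PiM {0::nat, 1} (\<lambda>_. lborel)) = ennreal (2 * \<delta> / L)"
proof -
  let ?M = "PiM {0::nat, 1} (\<lambda>_. lborel :: real measure)"
  have [measurable]: "(\<lambda>v. v i) \<in> borel_measurable ?M" if "i \<in> {0, 1}" for i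
    using that by measurable
  have lb: "sigma_finite_measure (lborel :: real measure)" by (rule lborel.sigma_finite_measure_axioms)
  have "(\<integral>\<^sup>+ v. strip_majorant L \<delta> c (v 0) (v 1) \<partial>?M) =
     (\<integral>\<^sup>+ v. indicator {0<..\<delta>} (v 0) * exp_decay_pos L (v 1) \<partial>?M)
       + (\<integral>\<^sup>+ v. exp_decay_pos L (v 0) * indicator {c..c+\<delta>} (v 1) \<partial>?M)"
    unfolding strip_majorant_def by (rule nn_integral_add) measurable
  also have "\<dots> = (\<integral>\<^sup>+ a. indicator {0<..\<delta>} a \<partial>lborel) * (\<integral>\<^sup>+ b. exp_decay_pos L b \<partial>lborel)
      + (\<integral>\<^sup>+ a. exp_decay_pos L a \<partial>lborel) * (\<integral>\<^sup>+ b. indicator {c..c+\<delta>} b \<partial>lborel)"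
    using nn_integral_PiM_pair_prod[OF lb, of "indicator {0<..\<delta>}" "exp_decay_pos L"]
      nn_integral_PiM_pair_prod[OF lb, of "exp_decay_pos L" "indicator {c..c+\<delta>}"] by simp
  also have "\<dots> = ennreal \<delta> * ennreal (1 / L) + ennreal (1 / L) * ennreal \<delta>"
    using assms by (simp add: nn_integral_exp_decay_pos)
  also have "\<dots> = ennreal (2 * \<delta> / L)"
    using assms by (simp add: ennreal_mult'[symmetric] ennreal_plus[symmetric] del: ennreal_plus)
  finally show ?thesis .
qed

definition Mint_integrand :: "real \<Rightarrow> real \<Rightarrow> nat \<Rightarrow> real \<Rightarrow> real \<Rightarrow> real \<Rightarrow> real \<times> real \<Rightarrow> (nat \<Rightarrow> real) \<Rightarrow> ennreal" where
  "Mint_integrand \<alpha> \<beta> n \<epsilon> l0 l1 x t =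
     indicator (Mset \<alpha> \<beta> n \<epsilon> x) t * ennreal (exp (- (\<Sum>i<n. lamvec l0 l1 n i * t i)))"

lemma Mint_eq_nn_integral:
  "Mint \<alpha> \<beta> n \<epsilon> l0 l1 x = (\<integral>\<^sup>+ t. Mint_integrand \<alpha> \<beta> n \<epsilon> l0 l1 x t \<partial>PiM {..<n} (\<lambda>_. lborel))"
  unfolding Mint_def Mint_integrand_def ..

lemma Psi_tail_measurable:
  assumes "1 \<le> n"
  shows "(\<lambda>t. Psi_tail \<alpha> \<beta> t n j x) \<in> PiM {..<n} (\<lambda>_. lborel) \<rightarrow>\<^sub>M borel"
proof (induction j)
  case 0
  have [measurable]: "(\<lambda>t. t (n - 1)) \<in> borel_measurable (PiM {..<n} (\<lambda>_. lborel :: real measure))"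
    using assms measurable_component_singleton[of "n - 1" "{..<n}" "\<lambda>_. lborel"] by simp
  show ?case unfolding Psi_tail.simps Psi_def by (intro borel_measurable_Pair; measurable)
next
  case (Suc j)
  have [measurable]: "(\<lambda>t. t (n - 1 - Suc j)) \<in> borel_measurable (PiM {..<n} (\<lambda>_. lborel :: real measure))"
    using assms measurable_component_singleton[of "n - 1 - Suc j" "{..<n}" "\<lambda>_. lborel"] by simp
  have [measurable]: "(\<lambda>t. Psi_tail \<alpha> \<beta> t n j x) \<in> PiM {..<n} (\<lambda>_. lborel) \<rightarrow>\<^sub>M borel \<Otimes>\<^sub>M borel"
    using Suc by (simp add: borel_prod)
  show ?case unfolding Psi_tail.simps Psi_def by (intro borel_measurable_Pair; measurable)
qed

lemma Mint_integrand_measurable: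
  assumes "1 \<le> n"
  shows "Mint_integrand \<alpha> \<beta> n \<epsilon> l0 l1 x \<in> borel_measurable (PiM {..<n} (\<lambda>_. lborel))"
proof -
  let ?M = "PiM {..<n} (\<lambda>_. lborel :: real measure)"
  have [measurable]: "(\<lambda>t. Psi_tail \<alpha> \<beta> t n j x) \<in> ?M \<rightarrow>\<^sub>M borel \<Otimes>\<^sub>M borel" for j
    using Psi_tail_measurable[OF assms] by (simp add: borel_prod)
  have [measurable]: "interior (Gamma \<alpha> \<beta>) \<in> sets (borel \<Otimes>\<^sub>M borel)"
    unfolding borel_prod by (intro borel_open) simp
  have "Measurable.pred ?M (\<lambda>t. 0 < t i)" if "i \<in> {..<n}" for i
    using that by measurable
  then have "Measurable.pred ?M (\<lambda>t. (\<forall>i\<in>{..<n}. 0 < t i) \<and> Psi_full \<alpha> \<beta> t n x \<in> interior (Gamma \<alpha> \<beta>)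
      \<and> (\<forall>j\<in>{..<n}. \<bar>Dfun \<alpha> \<beta> (Psi_tail \<alpha> \<beta> t n j x)\<bar> < \<epsilon>))"
    unfolding Psi_full_def Dfun_def by measurable
  then have "Measurable.pred ?M (\<lambda>t. t \<in> Mset \<alpha> \<beta> n \<epsilon> x)"
    by (rule measurable_cong[THEN iffD1, rotated])
      (auto simp: Mset_def T0_def space_PiM PiE_iff)
  then show ?thesis unfolding Mint_integrand_def by measurable
qed

lemma Psi_tail_drop2:
  assumes "j < n"
  shows "Psi_tail \<alpha> \<beta> t (n + 2) j x = Psi_tail \<alpha> \<beta> (drop2 n t) n j x"
  using assms
proof (induction j)
  case 0
  then show ?case by (simp add: drop2_def)
next
  case (Suc j)
  then have "n + 2 - 1 - Suc j = (n - 1 - Suc j) + 2" by simp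
  with Suc show ?case by (simp add: drop2_def)
qed

lemma Psi_full_add2:
  assumes "1 \<le> n"
  shows "Psi_tail \<alpha> \<beta> t (n + 2) n x = Psi \<alpha> \<beta> (n mod 2) (t 1) (Psi_full \<alpha> \<beta> (drop2 n t) n x)"
    and "Psi_full \<alpha> \<beta> t (n + 2) x = Psi \<alpha> \<beta> (Suc n mod 2) (t 0) (Psi_tail \<alpha> \<beta> t (n + 2) n x)"
proof -
  obtain m where m: "n = Suc m" using assms(1) by (cases n) auto
  then have "Psi_tail \<alpha> \<beta> t (n + 2) m x = Psi_full \<alpha> \<beta> (drop2 n t) n x"
    unfolding Psi_full_def using Psi_tail_drop2[of m n] by simp
  then show "Psi_tail \<alpha> \<beta> t (n + 2) n x = Psi \<alpha> \<beta> (n mod 2) (t 1) (Psi_full \<alpha> \<beta> (drop2 n t) n x)"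
    using m by simp
  show "Psi_full \<alpha> \<beta> t (n + 2) x = Psi \<alpha> \<beta> (Suc n mod 2) (t 0) (Psi_tail \<alpha> \<beta> t (n + 2) n x)"
    unfolding Psi_full_def by simp
qed

lemma abs_Dfun_less_iff:
  assumes "0 < \<beta>" "\<beta> < \<alpha>"
  shows "\<bar>Dfun \<alpha> \<beta> v\<bar> < \<epsilon> \<longleftrightarrow> \<bar>fst v - snd v\<bar> < \<epsilon> / (\<alpha> * \<beta>)"
  using assms by (simp add: Dfun_def abs_mult pos_less_divide_eq mult.commute)

lemma Mset_add2_dest:
  assumes "0 < \<beta>" "\<beta> < \<alpha>" "1 \<le> n" and t: "t \<in> Mset \<alpha> \<beta> (n + 2) \<epsilon> x"
  defines "y \<equiv> Psi_full \<alpha> \<beta> (drop2 n t) n x"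
  shows "drop2 n t \<in> Mset \<alpha> \<beta> n \<epsilon> x" and "0 < t 0" and "0 < t 1"
    and "t 0 < 6 * (\<epsilon> / (\<alpha> * \<beta>)) / (\<alpha> - \<beta>)
      \<or> t 1 \<in> near_diagonal_times \<alpha> \<beta> (\<epsilon> / (\<alpha> * \<beta>)) (if even n then y else point_reflect y)"
proof -
  define z where "z = Psi_tail \<alpha> \<beta> t (n + 2) n x"
  define w where "w = Psi_full \<alpha> \<beta> t (n + 2) x"
  have tpos: "t \<in> {..<n+2} \<rightarrow>\<^sub>E {0<..}" and w_int: "w \<in> interior (Gamma \<alpha> \<beta>)"
    and near: "\<And>j. j < n + 2 \<Longrightarrow> \<bar>Dfun \<alpha> \<beta> (Psi_tail \<alpha> \<beta> t (n + 2) j x)\<bar> < \<epsilon>"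
    using t unfolding Mset_def T0_def w_def by auto
  then show "0 < t 0" "0 < t 1" by auto
  have z: "z = Psi \<alpha> \<beta> (n mod 2) (t 1) y" and w: "w = Psi \<alpha> \<beta> (Suc n mod 2) (t 0) z"
    unfolding z_def w_def y_def using Psi_full_add2[OF assms(3)] by simp_all
  have "z \<in> interior (Gamma \<alpha> \<beta>)"
    using mem_interior_Gamma_if_Psi_mem_interior[OF assms(1,2), of "Suc n mod 2" "t 0" z]
      w_int \<open>0 < t 0\<close> unfolding w by simp
  then have "y \<in> interior (Gamma \<alpha> \<beta>)"
    using mem_interior_Gamma_if_Psi_mem_interior[OF assms(1,2), of "n mod 2" "t 1" y]
      \<open>0 < t 1\<close> unfolding z by simp
  moreover have "drop2 n t \<in> {..<n} \<rightarrow>\<^sub>E {0<..}" using tpos by (auto simp: drop2_def)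
  moreover have "\<bar>Dfun \<alpha> \<beta> (Psi_tail \<alpha> \<beta> (drop2 n t) n j x)\<bar> < \<epsilon>" if "j < n" for j
    using near[of j] that Psi_tail_drop2[OF that, of \<alpha> \<beta> t x] by simp
  ultimately show "drop2 n t \<in> Mset \<alpha> \<beta> n \<epsilon> x" unfolding Mset_def T0_def y_def by simp
  have "\<bar>fst z - snd z\<bar> < \<epsilon> / (\<alpha> * \<beta>)" "\<bar>fst w - snd w\<bar> < \<epsilon> / (\<alpha> * \<beta>)"
    using near[of n] near[of "n + 1"] unfolding z_def w_def Psi_full_def
    by (simp_all add: abs_Dfun_less_iff[OF assms(1,2)])
  then show "t 0 < 6 * (\<epsilon> / (\<alpha> * \<beta>)) / (\<alpha> - \<beta>)
      \<or> t 1 \<in> near_diagonal_times \<alpha> \<beta> (\<epsilon> / (\<alpha> * \<beta>)) (if even n then y else point_reflect y)"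
    using short_or_near_diagonal_time[OF assms(1,2) \<open>0 < t 0\<close> \<open>0 < t 1\<close> z w] w_int interior_subset
    by blast
qed

lemma lamvec_sum_add2:
  "(\<Sum>i<n+2. lamvec l0 l1 (n+2) i * t i)
     = lamvec l0 l1 (n+2) 0 * t 0 + lamvec l0 l1 (n+2) 1 * t 1 + (\<Sum>i<n. lamvec l0 l1 n i * drop2 n t i)"
proof -
  have "(\<Sum>i<n+2. lamvec l0 l1 (n+2) i * t i)
      = lamvec l0 l1 (n+2) 0 * t 0 + (lamvec l0 l1 (n+2) 1 * t 1
        + (\<Sum>i<n. lamvec l0 l1 (n+2) (Suc (Suc i)) * t (Suc (Suc i))))"
    by (simp only: add_2_eq_Suc' sum.lessThan_Suc_shift) simp
  also have "(\<Sum>i<n. lamvec l0 l1 (n+2) (Suc (Suc i)) * t (Suc (Suc i))) = (\<Sum>i<n. lamvec l0 l1 n i * drop2 n t i)"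
    by (rule sum.cong) (auto simp: lamvec_def drop2_def)
  finally show ?thesis by simp
qed

lemma Mint_integrand_add2_le:
  fixes \<epsilon> :: real and x :: "real \<times> real" and t :: "nat \<Rightarrow> real"
  assumes "0 < \<beta>" "\<beta> < \<alpha>" "1 \<le> n" "0 < min l0 l1"
  defines "e \<equiv> \<epsilon> / (\<alpha> * \<beta>)"
  defines "c \<equiv> \<lambda>\<omega>. Inf (near_diagonal_times \<alpha> \<beta> e
             (if even n then Psi_full \<alpha> \<beta> \<omega> n x else point_reflect (Psi_full \<alpha> \<beta> \<omega> n x)))"
  shows "Mint_integrand \<alpha> \<beta> (n + 2) \<epsilon> l0 l1 x t
    \<le> Mint_integrand \<alpha> \<beta> n \<epsilon> l0 l1 x (drop2 n t)
       * strip_majorant (min l0 l1) (6 * e / (\<alpha> - \<beta>)) (c (drop2 n t)) (t 0) (t 1)"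
proof (cases "t \<in> Mset \<alpha> \<beta> (n + 2) \<epsilon> x")
  case False
  then show ?thesis by (simp add: Mint_integrand_def)
next
  case True
  let ?L = "min l0 l1" and ?\<delta> = "6 * e / (\<alpha> - \<beta>)"
  note Mset_add2 = Mset_add2_dest[OF assms(1-3) True]
  have "t 0 < ?\<delta> \<or> t 1 \<in> {c (drop2 n t) .. c (drop2 n t) + ?\<delta>}"
    using Mset_add2(4) near_diagonal_times_window[OF assms(1,2)] unfolding c_def e_def by meson
  then have strip: "ennreal (exp (- (?L * t 0)) * exp (- (?L * t 1)))
      \<le> strip_majorant ?L ?\<delta> (c (drop2 n t)) (t 0) (t 1)"
    using assms(4) Mset_add2(2,3) by (intro exp_le_strip_majorant) auto
  have "?L * t 0 \<le> lamvec l0 l1 (n+2) 0 * t 0" "?L * t 1 \<le> lamvec l0 l1 (n+2) 1 * t 1"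
    using Mset_add2(2,3) by (auto intro!: mult_right_mono simp: lamvec_def)
  then have "exp (- (lamvec l0 l1 (n+2) 0 * t 0 + lamvec l0 l1 (n+2) 1 * t 1))
      \<le> exp (- (?L * t 0)) * exp (- (?L * t 1))"
    by (simp add: exp_add[symmetric])
  moreover have "exp (- (\<Sum>i<n+2. lamvec l0 l1 (n+2) i * t i))
      = exp (- (\<Sum>i<n. lamvec l0 l1 n i * drop2 n t i))
        * exp (- (lamvec l0 l1 (n+2) 0 * t 0 + lamvec l0 l1 (n+2) 1 * t 1))"
    unfolding lamvec_sum_add2 by (simp add: exp_add[symmetric] algebra_simps)
  ultimately have "Mint_integrand \<alpha> \<beta> (n + 2) \<epsilon> l0 l1 x t
      \<le> Mint_integrand \<alpha> \<beta> n \<epsilon> l0 l1 x (drop2 n t) * ennreal (exp (- (?L * t 0)) * exp (- (?L * t 1)))"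
    using True Mset_add2(1) unfolding Mint_integrand_def
    by (simp add: ennreal_mult'[symmetric] ennreal_leI)
  also have "\<dots> \<le> Mint_integrand \<alpha> \<beta> n \<epsilon> l0 l1 x (drop2 n t) * strip_majorant ?L ?\<delta> (c (drop2 n t)) (t 0) (t 1)"
    using strip by (rule mult_left_mono) simp
  finally show ?thesis .
qed

lemma Mint_add2_le:
  assumes "0 < \<beta>" "\<beta> < \<alpha>" "1 \<le> n" "0 < min l0 l1" "0 < \<epsilon>"
  shows "Mint \<alpha> \<beta> (n + 2) \<epsilon> l0 l1 x
    \<le> ennreal (12 * \<epsilon> / (\<alpha> * \<beta> * (\<alpha> - \<beta>) * min l0 l1)) * Mint \<alpha> \<beta> n \<epsilon> l0 l1 x"
proof -
  define \<delta> where "\<delta> = 6 * (\<epsilon> / (\<alpha> * \<beta>)) / (\<alpha> - \<beta>)"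
  define c where "c \<omega> = Inf (near_diagonal_times \<alpha> \<beta> (\<epsilon> / (\<alpha> * \<beta>))
    (if even n then Psi_full \<alpha> \<beta> \<omega> n x else point_reflect (Psi_full \<alpha> \<beta> \<omega> n x)))" for \<omega>
  have "0 \<le> \<delta>" using assms by (simp add: \<delta>_def)
  have "2 * \<delta> / min l0 l1 = 12 * \<epsilon> / (\<alpha> * \<beta> * (\<alpha> - \<beta>) * min l0 l1)"
    by (simp add: \<delta>_def)
  moreover have "(\<integral>\<^sup>+ t. Mint_integrand \<alpha> \<beta> (n + 2) \<epsilon> l0 l1 x t \<partial>PiM {..<n+2} (\<lambda>_. lborel))
    \<le> ennreal (2 * \<delta> / min l0 l1) * (\<integral>\<^sup>+ t. Mint_integrand \<alpha> \<beta> n \<epsilon> l0 l1 x t \<partial>PiM {..<n} (\<lambda>_. lborel))"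
  proof (rule nn_integral_PiM_add2_le[OF lborel.sigma_finite_measure_axioms])
    show "(\<lambda>v. strip_majorant (min l0 l1) \<delta> (c \<omega>) (v 0) (v 1)) \<in> borel_measurable (PiM {0::nat, 1} (\<lambda>_. lborel))"
      for \<omega> unfolding strip_majorant_def by measurable
    show "(\<integral>\<^sup>+ v. strip_majorant (min l0 l1) \<delta> (c \<omega>) (v 0) (v 1) \<partial>PiM {0::nat, 1} (\<lambda>_. lborel))
        = ennreal (2 * \<delta> / min l0 l1)" for \<omega>
      using assms(4) \<open>0 \<le> \<delta>\<close> by (rule nn_integral_strip_majorant)
    show "Mint_integrand \<alpha> \<beta> (n + 2) \<epsilon> l0 l1 x t
        \<le> Mint_integrand \<alpha> \<beta> n \<epsilon> l0 l1 x (drop2 n t) * strip_majorant (min l0 l1) \<delta> (c (drop2 n t)) (t 0) (t 1)"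
      for t unfolding \<delta>_def c_def by (rule Mint_integrand_add2_le[OF assms(1-4)])
  qed (use assms(3) in \<open>simp_all add: Mint_integrand_measurable\<close>)
  ultimately show ?thesis by (simp add: Mint_eq_nn_integral)
qed

theorem lemma7p8:
  fixes \<alpha> \<beta> l0 l1 :: real
  assumes "\<beta> > 0" and "\<alpha> > \<beta>" and "l0 > 0" and "l1 > 0"
  shows "\<exists>f :: real \<Rightarrow> real. (\<forall>\<epsilon>>0. f \<epsilon> \<ge> 0) \<and> (f \<longlongrightarrow> 0) (at_right 0) \<and>
     (\<forall>\<epsilon>>0. \<forall>n\<ge>1. \<forall>x\<in>interior (Gamma \<alpha> \<beta>).
        Mint \<alpha> \<beta> (n + 2) \<epsilon> l0 l1 x \<le> ennreal (f \<epsilon>) * Mint \<alpha> \<beta> n \<epsilon> l0 l1 x)"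
proof -
  define f where "f \<epsilon> = 12 * \<epsilon> / (\<alpha> * \<beta> * (\<alpha> - \<beta>) * min l0 l1)" for \<epsilon>
  have "0 < \<alpha> * \<beta> * (\<alpha> - \<beta>) * min l0 l1" using assms by simp
  then have "\<forall>\<epsilon>>0. f \<epsilon> \<ge> 0" and "(f \<longlongrightarrow> 0) (at_right 0)"
    unfolding f_def by (auto intro!: tendsto_eq_intros)
  moreover have "Mint \<alpha> \<beta> (n + 2) \<epsilon> l0 l1 x \<le> ennreal (f \<epsilon>) * Mint \<alpha> \<beta> n \<epsilon> l0 l1 x"
    if "0 < \<epsilon>" "1 \<le> n" for \<epsilon> n x
    unfolding f_def using Mint_add2_le[OF assms(1,2) that(2) _ that(1)] assms(3,4) by simp
  ultimately show ?thesis by blast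
qed

end
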